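(* Let $X$ be a Tychonoff space and $\mathcal{P}$ an ideal of closed subsets of $X$. If $X$ is a $P$-space (every $G_\delta$-subset of $X$ is open), then $C(X)_\mathcal{P}$ is a regular ring, i.e. for every $f\in C(X)_\mathcal{P}$ there is $g\in C(X)_\mathcal{P}$ with $f=f^2g$.
   Context: An ideal of closed subsets of $X$ is a family $\mathcal{P}$ of closed subsets closed under finite unions and under passing to closed subsets. $D_f$ is the set of discontinuity points of $f\in\mathbb{R}^X$; $C(X)_\mathcal{P}=\{f\in\mathbb{R}^X\colon\overline{D_f}\in\mathcal{P}\}$ with pointwise operations. (A space with $C(X)_\mathcal{P}$ regular is called a $\mathcal{P}P$-space.) *)

theory Defs
  imports "HOL-Analysis.Analysis"
begin

definition tychonoff_space :: "'a topology \<Rightarrow> bool" where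
  "tychonoff_space X \<longleftrightarrow> completely_regular_space X \<and> Hausdorff_space X"

definition P_space :: "'a topology \<Rightarrow> bool" where
  "P_space X \<longleftrightarrow> (\<forall>S. gdelta_in X S \<longrightarrow> openin X S)"

definition closed_ideal :: "'a topology \<Rightarrow> 'a set set \<Rightarrow> bool" where
  "closed_ideal X \<P> \<longleftrightarrow>
     (\<forall>A\<in>\<P>. closedin X A) \<and>
     (\<forall>A\<in>\<P>. \<forall>B\<in>\<P>. A \<union> B \<in> \<P>) \<and>
     (\<forall>A\<in>\<P>. \<forall>B. closedin X B \<and> B \<subseteq> A \<longrightarrow> B \<in> \<P>)"

definition continuous_at_pt :: "'a topology \<Rightarrow> ('a \<Rightarrow> real) \<Rightarrow> 'a \<Rightarrow> bool" where
  "continuous_at_pt X f x \<longleftrightarrow>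
     (\<forall>V. open V \<and> f x \<in> V \<longrightarrow> (\<exists>U. openin X U \<and> x \<in> U \<and> f ` U \<subseteq> V))"

definition discont_set :: "'a topology \<Rightarrow> ('a \<Rightarrow> real) \<Rightarrow> 'a set" where
  "discont_set X f = {x \<in> topspace X. \<not> continuous_at_pt X f x}"

definition C_P :: "'a topology \<Rightarrow> 'a set set \<Rightarrow> ('a \<Rightarrow> real) set" where
  "C_P X \<P> = {f. X closure_of (discont_set X f) \<in> \<P>}"

end

theory Submission
  imports Defs
begin

text \<open>Take \<open>g = inverse \<circ> f\<close>, so \<open>f = f\<^sup>2 g\<close> pointwise (using \<open>inverse 0 = 0\<close>).
  Off the closure of \<open>D\<^sub>f\<close>, \<open>f\<close> is continuous on an open set \<open>W\<close>, so the zero set of \<open>f\<close>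
  in \<open>W\<close> is a \<open>G\<^sub>\<delta>\<close>, hence open in a P-space; \<open>g\<close> vanishes on it, and is continuous
  wherever \<open>f\<close> is nonzero. Thus \<open>D\<^sub>g \<subseteq> cl D\<^sub>f\<close>, and \<open>g\<close> lies in \<open>C(X)\<^sub>\<P>\<close> because
  the ideal is closed under closed subsets.\<close>

lemma continuous_at_pt_compose:
  assumes "continuous_at_pt X f x" and "isCont h (f x)"
  shows "continuous_at_pt X (\<lambda>y. h (f y)) x"
  unfolding continuous_at_pt_def
proof (intro allI impI)
  fix V assume "open V \<and> h (f x) \<in> V"
  then obtain S where S: "open S" "f x \<in> S" "\<forall>t\<in>S. h t \<in> V"
    using assms(2) unfolding continuous_at_open by blast
  then obtain U where "openin X U" "x \<in> U" "f ` U \<subseteq> S"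
    using assms(1) unfolding continuous_at_pt_def by blast
  with S(3) show "\<exists>U. openin X U \<and> x \<in> U \<and> (\<lambda>y. h (f y)) ` U \<subseteq> V"
    by blast
qed

lemma discont_set_subset_closure_of:
  "discont_set X f \<subseteq> X closure_of discont_set X f"
  by (rule closure_of_subset) (auto simp: discont_set_def)

lemma openin_preimage_of_continuous_at_pt:
  assumes "openin X W" and "\<And>y. y \<in> W \<Longrightarrow> continuous_at_pt X f y" and "open V"
  shows "openin X {y \<in> W. f y \<in> V}"
proof (subst openin_subopen, intro ballI)
  fix y assume y: "y \<in> {y \<in> W. f y \<in> V}"
  then obtain U where "openin X U" "y \<in> U" "f ` U \<subseteq> V"
    using assms(2,3) unfolding continuous_at_pt_def by blast
  with y assms(1) show "\<exists>T. openin X T \<and> y \<in> T \<and> T \<subseteq> {y \<in> W. f y \<in> V}"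
    by (intro exI[of _ "U \<inter> W"]) auto
qed

lemma gdelta_in_zero_set:
  fixes f :: "'a \<Rightarrow> real"
  assumes "openin X W" and "\<And>y. y \<in> W \<Longrightarrow> continuous_at_pt X f y"
  shows "gdelta_in X {y \<in> W. f y = 0}"
proof -
  define Z where "Z n = {y \<in> W. f y \<in> ball 0 (inverse (real (Suc n)))}" for n
  have zero_set_eq: "{y \<in> W. f y = 0} = (\<Inter>n. Z n)"
  proof (intro equalityI subsetI)
    fix y assume y: "y \<in> (\<Inter>n. Z n)"
    have "f y = 0"
    proof (rule ccontr)
      assume "f y \<noteq> 0"
      then obtain n where "inverse (real (Suc n)) < \<bar>f y\<bar>"
        using reals_Archimedean[of "\<bar>f y\<bar>"] by auto
      moreover have "y \<in> Z n" using y by blast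
      ultimately show False by (simp add: Z_def)
    qed
    with y show "y \<in> {y \<in> W. f y = 0}" by (auto simp: Z_def)
  qed (auto simp: Z_def)
  have Z_open: "openin X (Z n)" for n
    unfolding Z_def using assms by (intro openin_preimage_of_continuous_at_pt) auto
  show ?thesis
    unfolding zero_set_eq by (rule gdelta_in_Inter) (auto intro: open_imp_gdelta_in Z_open)
qed

lemma P_space_continuous_at_pt_inverse:
  fixes f :: "'a \<Rightarrow> real"
  assumes "P_space X" and "openin X W" and "\<And>y. y \<in> W \<Longrightarrow> continuous_at_pt X f y"
    and "x \<in> W"
  shows "continuous_at_pt X (\<lambda>y. inverse (f y)) x"
proof (cases "f x = 0")
  case False
  then have "isCont inverse (f x)" by (intro continuous_intros) auto
  then show ?thesis by (rule continuous_at_pt_compose[OF assms(3)[OF assms(4)]])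
next
  case True
  let ?Z = "{y \<in> W. f y = 0}"
  have "openin X ?Z"
    using assms(1) gdelta_in_zero_set[OF assms(2,3)] unfolding P_space_def by blast
  moreover have "x \<in> ?Z" using assms(4) True by simp
  moreover have "(\<lambda>y. inverse (f y)) ` ?Z \<subseteq> V" if "inverse (f x) \<in> V" for V
    using that True by auto
  ultimately show ?thesis unfolding continuous_at_pt_def by blast
qed

lemma P_space_discont_set_inverse:
  fixes f :: "'a \<Rightarrow> real"
  assumes "P_space X"
  shows "discont_set X (\<lambda>y. inverse (f y)) \<subseteq> X closure_of discont_set X f"
proof
  define W where "W = topspace X - X closure_of discont_set X f"
  have W_open: "openin X W"
    unfolding W_def by (intro openin_diff openin_topspace closedin_closure_of)
  have f_cont: "continuous_at_pt X f y" if "y \<in> W" for y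
  proof (rule ccontr)
    assume "\<not> continuous_at_pt X f y"
    with that have "y \<in> discont_set X f" unfolding W_def discont_set_def by simp
    with that show False using discont_set_subset_closure_of[of X f] unfolding W_def by blast
  qed
  fix x assume "x \<in> discont_set X (\<lambda>y. inverse (f y))"
  then have x: "x \<in> topspace X" and "\<not> continuous_at_pt X (\<lambda>y. inverse (f y)) x"
    unfolding discont_set_def by simp_all
  with P_space_continuous_at_pt_inverse[OF assms W_open f_cont] have "x \<notin> W" by blast
  with x show "x \<in> X closure_of discont_set X f" unfolding W_def by blast
qed

lemma C_P_closure_of_subset:
  assumes "closed_ideal X \<P>" and "f \<in> C_P X \<P>"
    and "X closure_of discont_set X g \<subseteq> X closure_of discont_set X f"
  shows "g \<in> C_P X \<P>"
proof -
  have "X closure_of discont_set X f \<in> \<P>" using assms(2) unfolding C_P_def by simp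
  moreover have "closedin X (X closure_of discont_set X g)" by simp
  ultimately have "X closure_of discont_set X g \<in> \<P>"
    using assms(1,3) unfolding closed_ideal_def by blast
  then show ?thesis unfolding C_P_def by simp
qed

theorem mainTheorem13:
  fixes X :: "'a topology" and \<P> :: "'a set set"
  assumes "tychonoff_space X" and "closed_ideal X \<P>" and "P_space X"
  shows "\<forall>f\<in>C_P X \<P>. \<exists>g\<in>C_P X \<P>. \<forall>x\<in>topspace X. f x = (f x)\<^sup>2 * g x"
proof
  fix f assume f: "f \<in> C_P X \<P>"
  have "X closure_of discont_set X (\<lambda>y. inverse (f y)) \<subseteq> X closure_of discont_set X f"
    by (rule closure_of_minimal[OF P_space_discont_set_inverse[OF assms(3)]]) simp
  then have inverse_in_C_P: "(\<lambda>y. inverse (f y)) \<in> C_P X \<P>"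
    by (rule C_P_closure_of_subset[OF assms(2) f])
  have regular: "f x = (f x)\<^sup>2 * inverse (f x)" for x
    by (cases "f x = 0") (simp_all add: power2_eq_square)
  show "\<exists>g\<in>C_P X \<P>. \<forall>x\<in>topspace X. f x = (f x)\<^sup>2 * g x"
    using regular by (intro bexI[OF _ inverse_in_C_P]) simp
qed

end
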